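(* Fix a positive integer $n$ and two partitions $\Lambda_w$ and $\Lambda_b$ of $n$. Then $$\sum_{T\in\mathbf{W}_{\Lambda_w,\Lambda_b}}\omega(T)-\sum_{T\in\mathbf{B}_{\Lambda_w,\Lambda_b}}\omega(T)=0.$$
   Context: A black and white tree is a finite tree embedded in $\mathbb{C}$ whose vertices are colored black and white so that adjacent vertices have different colors. It is real if it is invariant (including colors) under complex conjugation. Two real trees are isomorphic if one is carried to the other by a homeomorphism of $\mathbb{C}$ commuting with complex conjugation and preserving the orientation of the real axis (and the colors); trees are considered up to isomorphism. The real vertices of a real tree $T$ are its vertices on $\mathbb{R}$; the real part sequence of $T$ is the sequence of (color, degree) of the real vertices from left to right; the first and last real vertices are the border vertices. The weight $\omega(T)$: if the real part sequence is not symmetric (not a palindrome), $\omega(T)=0$; if $T$ has only one real vertex, $\omega(T)=1$; if the real part sequence is symmetric, $T$ has more than one real vertex and the middle real vertex has the same color as the border vertices, $\omega(T)=-1$; if it is symmetric, with more than one real vertex, and the middle real vertex has a different color from the border vertices, $\omega(T)=1$. $T$ is white side (resp. black side) if its rightmost real vertex is white (resp. black). $\mathbf{W}_{\Lambda_w,\Lambda_b}$ (resp. $\mathbf{B}_{\Lambda_w,\Lambda_b}$) is the set of isomorphism classes of white side (resp. black side) real trees with white vertex degrees $\Lambda_w$ and black vertex degrees $\Lambda_b$. *)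

theory Defs
  imports Main "HOL-Library.Multiset"
begin

text \<open>Combinatorial model of real black and white trees.
  Colours: True = white, False = black.

  A real tree meets the real axis in a path of real vertices v_0, ..., v_{k-1}
  (left to right, consecutive ones joined by real edges, colours alternating).
  The part of the tree in the open upper half plane is, at each real vertex,
  an ordered sequence (counterclockwise, from the positive real direction to
  the negative one) of edges, each leading to a planted plane tree; the lower
  half is the mirror image.  Up to isomorphism (homeomorphisms of C commuting
  with conjugation and preserving the orientation of R and the colours) a real
  tree is exactly this data.\<close>

datatype ptree = PNode "ptree list"

text \<open>Multiset of (colour, degree) of the vertices of a planted plane tree
  whose top vertex has colour c (its degree counts the edge to its parent).\<close>
fun pt_degs :: "bool \<Rightarrow> ptree \<Rightarrow> (bool \<times> nat) multiset" where
  "pt_degs c (PNode ts) = {#(c, Suc (length ts))#} + sum_list (map (pt_degs (\<not> c)) ts)"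

text \<open>A real tree: colour of the leftmost real vertex, and for each real vertex
  (left to right) the list of subtrees hanging into the upper half plane.\<close>
type_synonym rtree = "bool \<times> ptree list list"

definition rt_valid :: "rtree \<Rightarrow> bool" where
  "rt_valid T = (snd T \<noteq> [])"

definition real_color :: "rtree \<Rightarrow> nat \<Rightarrow> bool" where
  "real_color T i = (if even i then fst T else \<not> fst T)"

definition real_deg :: "rtree \<Rightarrow> nat \<Rightarrow> nat" where
  "real_deg T i = 2 * length (snd T ! i) + (if 0 < i then 1 else 0)
                   + (if i + 1 < length (snd T) then 1 else 0)"

text \<open>All vertices with colour and degree; non-real vertices come in
  conjugate pairs and are counted twice.\<close>
definition all_degs :: "rtree \<Rightarrow> (bool \<times> nat) multiset" where
  "all_degs T = (\<Sum>i<length (snd T).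
      {#(real_color T i, real_deg T i)#}
      + (let M = sum_list (map (pt_degs (\<not> real_color T i)) (snd T ! i)) in M + M))"

definition white_degs :: "rtree \<Rightarrow> nat multiset" where
  "white_degs T = image_mset snd (filter_mset fst (all_degs T))"

definition black_degs :: "rtree \<Rightarrow> nat multiset" where
  "black_degs T = image_mset snd (filter_mset (\<lambda>p. \<not> fst p) (all_degs T))"

definition real_part_seq :: "rtree \<Rightarrow> (bool \<times> nat) list" where
  "real_part_seq T = map (\<lambda>i. (real_color T i, real_deg T i)) [0..<length (snd T)]"

definition weight :: "rtree \<Rightarrow> int" where
  "weight T = (let s = real_part_seq T; k = length s in
     if rev s \<noteq> s then 0
     else if k = 1 then 1
     else if fst (s ! (k div 2)) = fst (s ! 0) then -1
     else 1)"

definition white_side :: "rtree \<Rightarrow> bool" where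
  "white_side T = real_color T (length (snd T) - 1)"

definition W_set :: "nat multiset \<Rightarrow> nat multiset \<Rightarrow> rtree set" where
  "W_set Lw Lb = {T. rt_valid T \<and> white_degs T = Lw \<and> black_degs T = Lb \<and> white_side T}"

definition B_set :: "nat multiset \<Rightarrow> nat multiset \<Rightarrow> rtree set" where
  "B_set Lw Lb = {T. rt_valid T \<and> white_degs T = Lw \<and> black_degs T = Lb \<and> \<not> white_side T}"

definition is_partition :: "nat \<Rightarrow> nat multiset \<Rightarrow> bool" where
  "is_partition n L = ((\<forall>x\<in>#L. 0 < x) \<and> sum_mset L = n)"

end

theory Submission
  imports Defs
begin

text \<open>Only trees with a palindromic real part sequence have nonzero weight. Such a tree has an
  odd number 2m+1 of real vertices (the border vertices share their colour), and the
  palindrome forces real vertices at equal distance from the middle one to carry the same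
  number of upper subtrees. For m \<ge> 1, folding the real axis at the middle vertex glues the
  two halves into one planted tree hanging into the upper half plane; this is a bijection,
  preserving all vertex degrees, onto the trees with a single real vertex that is not
  isolated. The side of the symmetric tree and its weight are both decided by the parity of
  m, and together they give it the opposite signed weight from its folded image, so all
  signed weights cancel.\<close>

definition alt_color :: "bool \<Rightarrow> nat \<Rightarrow> bool" where
  "alt_color c i = (if even i then c else \<not> c)"

lemma alt_color_0 [simp]: "alt_color c 0 = c"
  by (simp add: alt_color_def)

lemma alt_color_Suc: "alt_color c (Suc i) = (\<not> alt_color c i)"
  by (simp add: alt_color_def)

lemma alt_color_alt_color: "alt_color (alt_color c m) m = c"
  by (simp add: alt_color_def)

definition hanging_degs :: "bool \<Rightarrow> ptree list \<Rightarrow> (bool \<times> nat) multiset" where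
  "hanging_degs c X = sum_list (map (pt_degs (\<not> c)) X) + sum_list (map (pt_degs (\<not> c)) X)"

text \<open>Degrees along a path of real vertices of alternating colours starting with c, the i-th
  one carrying the upper subtrees L!i; the end vertices get l resp. r additional edges.\<close>

fun path_degs :: "bool \<Rightarrow> nat \<Rightarrow> nat \<Rightarrow> ptree list list \<Rightarrow> (bool \<times> nat) multiset" where
  "path_degs c l r [] = {#}"
| "path_degs c l r [X] = {#(c, 2 * length X + l + r)#} + hanging_degs c X"
| "path_degs c l r (X # Y # Z) =
     {#(c, 2 * length X + l + 1)#} + hanging_degs c X + path_degs (\<not> c) 1 r (Y # Z)"

lemma path_degs_Cons:
  "xs \<noteq> [] \<Longrightarrow>
   path_degs c l r (x # xs) = {#(c, 2 * length x + l + 1)#} + hanging_degs c x + path_degs (\<not> c) 1 r xs"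
  by (cases xs) auto

lemma sum_eq_path_degs:
  "(\<Sum>i<length L. {#(alt_color c (i + s), 2 * length (L ! i) + (if 0 < i + s then 1 else 0)
       + (if i + 1 < length L then 1 else 0))#} + hanging_degs (alt_color c (i + s)) (L ! i))
   = path_degs (alt_color c s) (if 0 < s then 1 else 0) 0 L"
proof (induction L arbitrary: s)
  case Nil
  then show ?case by simp
next
  case (Cons X rest)
  show ?case
  proof (cases rest)
    case Nil
    then show ?thesis by simp
  next
    case (Cons Y Z)
    then show ?thesis
      unfolding length_Cons sum.lessThan_Suc_shift
      using Cons.IH[of "Suc s"] by (simp add: alt_color_Suc)
  qed
qed

lemma all_degs_eq_path_degs: "all_degs (c, L) = path_degs c 0 0 L"
proof -
  have "all_degs (c, L) = (\<Sum>i<length L. {#(alt_color c (i + 0), 2 * length (L ! i)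
      + (if 0 < i + 0 then 1 else 0) + (if i + 1 < length L then 1 else 0))#}
      + hanging_degs (alt_color c (i + 0)) (L ! i))"
    unfolding all_degs_def real_color_def real_deg_def alt_color_def hanging_degs_def Let_def
      fst_conv snd_conv by simp
  then show ?thesis
    by (simp only: sum_eq_path_degs) simp
qed

lemma path_degs_append:
  "xs \<noteq> [] \<Longrightarrow> ys \<noteq> [] \<Longrightarrow>
   path_degs c l r (xs @ ys) = path_degs c l 1 xs + path_degs (alt_color c (length xs)) 1 r ys"
proof (induction xs arbitrary: c l)
  case Nil
  then show ?case by simp
next
  case (Cons x xs)
  show ?case
  proof (cases xs)
    case Nil
    then show ?thesis using Cons.prems by (cases ys) (auto simp: alt_color_def)
  next
    case (Cons y zs)
    then show ?thesis
      using Cons.IH[of "\<not> c" 1] Cons.prems by (simp add: alt_color_def add.assoc)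
  qed
qed

lemma path_degs_rev: "path_degs c l r (rev xs) = path_degs (alt_color c (length xs - 1)) r l xs"
proof (induction xs arbitrary: c l r)
  case Nil
  then show ?case by simp
next
  case (Cons x xs)
  show ?case
  proof (cases "xs = []")
    case True
    then show ?thesis by simp
  next
    case False
    have "path_degs c l r (rev (x # xs))
        = path_degs (alt_color c (length xs - 1)) 1 l xs + path_degs (alt_color c (length xs)) 1 r [x]"
      using False Cons.IH by (simp add: path_degs_append)
    also have "\<dots> = path_degs (alt_color c (length (x # xs) - 1)) r l (x # xs)"
      using False by (cases xs) (simp_all add: alt_color_def algebra_simps path_degs_Cons)
    finally show ?thesis .
  qed
qed

text \<open>Folding a path of real vertices: the list P pairs, from the vertex next to the fold
  outwards, the upper subtrees of the left half with those of the right half. In the folded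
  planted tree each node stands for such a pair, its first child continues the path and the
  remaining children are the left subtrees followed by the right ones.\<close>

fun fold_ptree :: "(ptree list \<times> ptree list) list \<Rightarrow> ptree" where
  "fold_ptree [] = PNode []"
| "fold_ptree [(A, B)] = PNode (A @ B)"
| "fold_ptree ((A, B) # P # Ps) = PNode (fold_ptree (P # Ps) # A @ B)"

fun unfold_ptree :: "ptree \<Rightarrow> (ptree list \<times> ptree list) list" where
  "unfold_ptree (PNode []) = [([], [])]"
| "unfold_ptree (PNode (t # ts)) = (if odd (length ts)
      then [(take (Suc (length ts) div 2) (t # ts), drop (Suc (length ts) div 2) (t # ts))]
      else (take (length ts div 2) ts, drop (length ts div 2) ts) # unfold_ptree t)"

definition balanced :: "(ptree list \<times> ptree list) list \<Rightarrow> bool" where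
  "balanced P = (\<forall>(A, B) \<in> set P. length A = length B)"

lemma unfold_ptree_valid:
  "unfold_ptree t \<noteq> [] \<and> balanced (unfold_ptree t) \<and> fold_ptree (unfold_ptree t) = t"
proof (induction t rule: unfold_ptree.induct)
  case 1
  then show ?case by (simp add: balanced_def)
next
  case (2 t ts)
  show ?case
  proof (cases "odd (length ts)")
    case True
    then show ?thesis by (auto simp: balanced_def min_def; presburger)
  next
    case False
    with 2 obtain Q Qs where Q: "unfold_ptree t = Q # Qs" by (cases "unfold_ptree t") auto
    have "fold_ptree (unfold_ptree (PNode (t # ts)))
        = PNode (fold_ptree (unfold_ptree t) # take (length ts div 2) ts @ drop (length ts div 2) ts)"
      using False Q by (cases Q) simp
    then show ?thesis using False 2 by (auto simp: balanced_def min_def)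
  qed
qed

lemma unfold_fold_ptree: "P \<noteq> [] \<Longrightarrow> balanced P \<Longrightarrow> unfold_ptree (fold_ptree P) = P"
proof (induction P rule: fold_ptree.induct)
  case 1
  then show ?case by simp
next
  case (2 A B)
  show ?case
  proof (cases "A @ B")
    case Nil
    then show ?thesis by simp
  next
    case (Cons t ts)
    have "length A = length B" using 2 by (simp add: balanced_def)
    then have l: "Suc (length ts) = 2 * length A" using arg_cong[OF Cons, of length] by simp
    then have "odd (length ts)" by presburger
    moreover have "Suc (length ts) div 2 = length A" using l by simp
    ultimately have "unfold_ptree (fold_ptree [(A, B)])
        = [(take (length A) (A @ B), drop (length A) (A @ B))]"
      using Cons by simp
    then show ?thesis by simp
  qed
next
  case (3 A B P Ps)
  then show ?case by (simp add: balanced_def min_def)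
qed

text \<open>Each node of the folded tree has the degree of the two real vertices it stands for, the
  edge to its parent taking the place of the real edge towards the middle.\<close>

lemma pt_degs_fold_ptree:
  "P \<noteq> [] \<Longrightarrow> balanced P \<Longrightarrow>
   pt_degs c (fold_ptree P) + pt_degs c (fold_ptree P)
   = path_degs c 1 0 (map fst P) + path_degs c 1 0 (map snd P)"
proof (induction P arbitrary: c rule: fold_ptree.induct)
  case 1
  then show ?case by simp
next
  case (2 A B)
  then show ?case by (simp add: balanced_def hanging_degs_def algebra_simps mult_2_right)
next
  case (3 A B P Ps)
  then have "length A = length B" and "balanced (P # Ps)" by (auto simp: balanced_def)
  with "3.IH"[of "\<not> c"] show ?case
    by (cases P) (simp add: hanging_degs_def algebra_simps mult_2_right)
qed

text \<open>The real tree with 2 * length P + 1 real vertices whose middle one has colour d and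
  upper subtrees D, and whose k-th pair in P holds the upper subtrees of the two real vertices
  at distance k + 1 from the middle.\<close>

definition symmetric_tree :: "bool \<Rightarrow> (ptree list \<times> ptree list) list \<Rightarrow> ptree list \<Rightarrow> rtree" where
  "symmetric_tree d P D = (alt_color d (length P), rev (map fst P) @ [D] @ map snd P)"

definition single_vertex_tree :: "bool \<Rightarrow> ptree \<Rightarrow> ptree list \<Rightarrow> rtree" where
  "single_vertex_tree d t D = (d, [t # D])"

lemma all_degs_symmetric_tree:
  assumes "P \<noteq> []" "balanced P"
  shows "all_degs (symmetric_tree d P D) = all_degs (single_vertex_tree d (fold_ptree P) D)"
proof -
  let ?m = "length P"
  let ?c = "alt_color d ?m"
  have "alt_color ?c (?m - 1) = (\<not> d)"
    using assms(1) by (cases ?m) (auto simp: alt_color_def)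
  then have "all_degs (symmetric_tree d P D)
      = path_degs (\<not> d) 1 0 (map fst P)
        + ({#(d, 2 * length D + 2)#} + hanging_degs d D + path_degs (\<not> d) 1 0 (map snd P))"
    using assms(1) by (simp add: symmetric_tree_def all_degs_eq_path_degs path_degs_append
        path_degs_rev path_degs_Cons alt_color_alt_color)
  also have "\<dots> = {#(d, 2 * length D + 2)#} + hanging_degs d D
      + (pt_degs (\<not> d) (fold_ptree P) + pt_degs (\<not> d) (fold_ptree P))"
    using pt_degs_fold_ptree[OF assms, of "\<not> d"] by (simp add: algebra_simps)
  also have "\<dots> = all_degs (single_vertex_tree d (fold_ptree P) D)"
    by (simp add: single_vertex_tree_def all_degs_eq_path_degs hanging_degs_def algebra_simps)
  finally show ?thesis .
qed

lemma length_real_part_seq [simp]: "length (real_part_seq T) = length (snd T)"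
  by (simp add: real_part_seq_def)

lemma nth_real_part_seq:
  "i < length (snd T) \<Longrightarrow> real_part_seq T ! i = (alt_color (fst T) i, real_deg T i)"
  by (simp add: real_part_seq_def real_color_def alt_color_def)

lemma rev_eq_iff_nth: "rev s = s \<longleftrightarrow> (\<forall>i < length s. s ! (length s - 1 - i) = s ! i)"
  by (auto simp: list_eq_iff_nth_eq rev_nth)

lemma length_symmetric_tree: "length (snd (symmetric_tree d P D)) = 2 * length P + 1"
  by (simp add: symmetric_tree_def)

lemma nth_symmetric_tree_left:
  "i < length P \<Longrightarrow> snd (symmetric_tree d P D) ! i = fst (P ! (length P - 1 - i))"
  by (simp add: symmetric_tree_def nth_append rev_nth)

lemma nth_symmetric_tree_right:
  "j < length P \<Longrightarrow> snd (symmetric_tree d P D) ! (length P + 1 + j) = snd (P ! j)"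
  by (simp add: symmetric_tree_def nth_append)

lemma length_mirror_symmetric_tree:
  assumes "balanced P" "i \<le> 2 * length P"
  shows "length (snd (symmetric_tree d P D) ! (2 * length P - i))
       = length (snd (symmetric_tree d P D) ! i)"
proof -
  let ?m = "length P"
  let ?L = "snd (symmetric_tree d P D)"
  have left: "length (?L ! (2 * ?m - i)) = length (?L ! i)" if "i < ?m" for i
  proof -
    have "2 * ?m - i = ?m + 1 + (?m - 1 - i)" using that by simp
    then have "?L ! (2 * ?m - i) = snd (P ! (?m - 1 - i))"
      using nth_symmetric_tree_right[of "?m - 1 - i" P d D] that by simp
    moreover have "?L ! i = fst (P ! (?m - 1 - i))"
      using that by (rule nth_symmetric_tree_left)
    moreover have "P ! (?m - 1 - i) \<in> set P" using that by simp
    ultimately show ?thesis using assms(1) unfolding balanced_def by auto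
  qed
  consider "i < ?m" | "i = ?m" | "?m < i" by linarith
  then show ?thesis
  proof cases
    case 3
    then have "2 * ?m - i < ?m" using assms(2) by simp
    from left[OF this] show ?thesis using assms(2) by simp
  qed (simp_all add: left)
qed

lemma weight_symmetric_tree:
  assumes "P \<noteq> []" "balanced P"
  shows "weight (symmetric_tree d P D) = (if even (length P) then -1 else 1)"
proof -
  let ?T = "symmetric_tree d P D"
  let ?s = "real_part_seq ?T"
  let ?m = "length P"
  have k: "length ?s = 2 * ?m + 1" by (simp add: length_symmetric_tree)
  have "rev ?s = ?s"
    unfolding rev_eq_iff_nth
  proof (intro allI impI)
    fix i assume i: "i < length ?s"
    then have i2: "i \<le> 2 * ?m" using k by simp
    have "real_deg ?T (2 * ?m - i) = real_deg ?T i"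
      unfolding real_deg_def length_symmetric_tree length_mirror_symmetric_tree[OF assms(2) i2]
      using i2 by auto
    moreover have "alt_color (fst ?T) (2 * ?m - i) = alt_color (fst ?T) i"
      using i2 by (simp add: alt_color_def)
    ultimately show "?s ! (length ?s - 1 - i) = ?s ! i"
      using k i by (simp add: nth_real_part_seq length_symmetric_tree)
  qed
  moreover have "fst (?s ! (length ?s div 2)) = d" and "fst (?s ! 0) = alt_color d ?m"
    using k by (simp_all add: nth_real_part_seq length_symmetric_tree symmetric_tree_def
        alt_color_alt_color)
  ultimately show ?thesis
    using k assms(1) unfolding weight_def Let_def by (simp add: alt_color_def)
qed

lemma white_side_symmetric_tree: "white_side (symmetric_tree d P D) = alt_color d (length P)"
  by (simp add: white_side_def real_color_def symmetric_tree_def alt_color_def)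

lemma weight_single_vertex_tree: "weight (single_vertex_tree d t D) = 1"
  by (simp add: weight_def real_part_seq_def single_vertex_tree_def)

lemma white_side_single_vertex_tree: "white_side (single_vertex_tree d t D) = d"
  by (simp add: white_side_def real_color_def single_vertex_tree_def)

lemma symmetric_tree_if_weight_nonzero:
  assumes "rt_valid T" "weight T \<noteq> 0" "length (snd T) \<noteq> 1"
  obtains d P D where "P \<noteq> []" "balanced P" "T = symmetric_tree d P D"
proof -
  obtain c L where T: "T = (c, L)" by (cases T)
  let ?s = "real_part_seq T"
  let ?k = "length L"
  have k: "?k \<noteq> 0" using assms(1) T by (simp add: rt_valid_def)
  have "rev ?s = ?s" using assms(2) unfolding weight_def Let_def by (auto split: if_splits)
  then have mirror: "?s ! (?k - 1 - i) = ?s ! i" if "i < ?k" for i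
    using that T unfolding rev_eq_iff_nth by simp
  have "odd ?k"
  proof
    assume "even ?k"
    moreover have "alt_color c (?k - 1) = c"
      using mirror[of 0] k T nth_real_part_seq[of 0 T] nth_real_part_seq[of "?k - 1" T] by simp
    ultimately show False using k by (simp add: alt_color_def)
  qed
  then obtain m where km: "?k = 2 * m + 1" by (rule oddE)
  have "m \<noteq> 0" using assms(3) T km by simp
  have mirror_length: "length (L ! (?k - 1 - i)) = length (L ! i)" if "i < ?k" for i
  proof -
    have "real_deg T (?k - 1 - i) = real_deg T i"
      using mirror[OF that] that T by (simp add: nth_real_part_seq)
    then show ?thesis using that T unfolding real_deg_def by (auto split: if_splits)
  qed
  let ?A = "rev (take m L)"
  let ?B = "drop (Suc m) L"
  have lengths: "length ?A = m" "length ?B = m" using km by auto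
  have "balanced (zip ?A ?B)"
    unfolding balanced_def
  proof
    fix p assume "p \<in> set (zip ?A ?B)"
    then obtain j where j: "j < m" "p = (?A ! j, ?B ! j)" using lengths by (auto simp: set_zip)
    have "?A ! j = L ! (m - 1 - j)" and "?B ! j = L ! (?k - 1 - (m - 1 - j))"
      using j km by (simp_all add: rev_nth algebra_simps)
    then show "case p of (A, B) \<Rightarrow> length A = length B"
      using mirror_length[of "m - 1 - j"] j km by simp
  qed
  moreover have "zip ?A ?B \<noteq> []" using km \<open>m \<noteq> 0\<close> by auto
  moreover have "T = symmetric_tree (alt_color c m) (zip ?A ?B) (L ! m)"
    using lengths km id_take_nth_drop[of m L] T by (simp add: symmetric_tree_def alt_color_alt_color)
  ultimately show thesis using that by blast
qed

definition fold_tree :: "rtree \<Rightarrow> rtree" where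
  "fold_tree T = (let L = snd T; m = length L div 2 in
     single_vertex_tree (alt_color (fst T) m)
       (fold_ptree (zip (rev (take m L)) (drop (Suc m) L))) (L ! m))"

definition unfold_tree :: "rtree \<Rightarrow> rtree" where
  "unfold_tree T = symmetric_tree (fst T) (unfold_ptree (hd (hd (snd T)))) (tl (hd (snd T)))"

lemma fold_symmetric_tree:
  "fold_tree (symmetric_tree d P D) = single_vertex_tree d (fold_ptree P) D"
proof -
  have "length (snd (symmetric_tree d P D)) div 2 = length P"
    by (simp add: length_symmetric_tree)
  then show ?thesis
    by (simp add: fold_tree_def symmetric_tree_def nth_append zip_map_fst_snd alt_color_alt_color)
qed

lemma unfold_single_vertex_tree:
  "unfold_tree (single_vertex_tree d t D) = symmetric_tree d (unfold_ptree t) D"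
  by (simp add: unfold_tree_def single_vertex_tree_def)

fun ptree_size :: "ptree \<Rightarrow> nat" where
  "ptree_size (PNode ts) = Suc (sum_list (map ptree_size ts))"

lemma size_sum_list_map: "size (sum_list (map f xs) :: 'a multiset) = sum_list (map (\<lambda>x. size (f x)) xs)"
  by (induction xs) auto

lemma size_pt_degs: "size (pt_degs c t) = ptree_size t"
proof (induction c t rule: pt_degs.induct)
  case (1 c ts)
  then have "(\<Sum>t\<leftarrow>ts. size (pt_degs (\<not> c) t)) = sum_list (map ptree_size ts)"
    by (metis (mono_tags, lifting) map_eq_conv)
  then show ?case by (simp add: size_sum_list_map)
qed

lemma ptree_size_pos: "0 < ptree_size t"
  by (cases t) simp

lemma length_le_sum_ptree_size: "length ts \<le> sum_list (map ptree_size ts)"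
proof (induction ts)
  case (Cons t ts)
  then show ?case using ptree_size_pos[of t] by simp
qed simp

lemma finite_ptree_size_le: "finite {t. ptree_size t \<le> N}"
proof (induction N)
  case 0
  show ?case
    using ptree_size_pos by (metis (mono_tags) Collect_empty_eq finite.emptyI le_zero_eq not_gr0)
next
  case (Suc N)
  have "{t. ptree_size t \<le> Suc N}
      \<subseteq> PNode ` {ts. set ts \<subseteq> {t. ptree_size t \<le> N} \<and> length ts \<le> N}"
  proof
    fix t assume t: "t \<in> {t. ptree_size t \<le> Suc N}"
    obtain ts where ts: "t = PNode ts" by (cases t)
    have s: "sum_list (map ptree_size ts) \<le> N" using t ts by simp
    then have "set ts \<subseteq> {t. ptree_size t \<le> N}"
      using member_le_sum_list[of _ "map ptree_size ts"] by fastforce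
    moreover have "length ts \<le> N" using s length_le_sum_ptree_size[of ts] by simp
    ultimately show "t \<in> PNode ` {ts. set ts \<subseteq> {t. ptree_size t \<le> N} \<and> length ts \<le> N}"
      using ts by auto
  qed
  moreover have "finite (PNode ` {ts. set ts \<subseteq> {t. ptree_size t \<le> N} \<and> length ts \<le> N})"
    using Suc finite_lists_length_le by blast
  ultimately show ?case by (rule finite_subset)
qed

lemma size_path_degs:
  "size (path_degs c l r L) = length L + 2 * sum_list (map (\<lambda>X. sum_list (map ptree_size X)) L)"
  by (induction c l r L rule: path_degs.induct)
    (simp_all add: hanging_degs_def size_sum_list_map size_pt_degs)

lemma finite_size_all_degs: "finite {T. size (all_degs T) = N}"
proof -
  let ?Xs = "{X. set X \<subseteq> {t. ptree_size t \<le> N} \<and> length X \<le> N}"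
  let ?S = "(UNIV :: bool set) \<times> {L. set L \<subseteq> ?Xs \<and> length L \<le> N}"
  have "finite ?S"
    using finite_lists_length_le[OF finite_lists_length_le[OF finite_ptree_size_le]] by simp
  moreover have "{T. size (all_degs T) = N} \<subseteq> ?S"
  proof
    fix T assume "T \<in> {T. size (all_degs T) = N}"
    moreover obtain c L where T: "T = (c, L)" by (cases T)
    ultimately have N: "N = length L + 2 * sum_list (map (\<lambda>X. sum_list (map ptree_size X)) L)"
      by (simp add: all_degs_eq_path_degs size_path_degs)
    have "X \<in> ?Xs" if X: "X \<in> set L" for X
    proof -
      have sX: "sum_list (map ptree_size X) \<le> N"
        using member_le_sum_list[of "sum_list (map ptree_size X)"
            "map (\<lambda>X. sum_list (map ptree_size X)) L"] X N by auto
      then have "set X \<subseteq> {t. ptree_size t \<le> N}"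
        using member_le_sum_list[of _ "map ptree_size X"] by fastforce
      moreover have "length X \<le> N" using sX length_le_sum_ptree_size[of X] by simp
      ultimately show ?thesis by simp
    qed
    then show "T \<in> ?S" using N T by auto
  qed
  ultimately show ?thesis by (rule finite_subset[rotated])
qed

lemma size_all_degs: "size (all_degs T) = size (white_degs T) + size (black_degs T)"
  unfolding white_degs_def black_degs_def size_image_mset
  by (metis multiset_partition size_union)

definition signed_weight :: "rtree \<Rightarrow> int" where
  "signed_weight T = (if white_side T then weight T else - weight T)"

lemma signed_weight_single_vertex_tree:
  "signed_weight (single_vertex_tree d t D) = (if d then 1 else -1)"
  by (simp add: signed_weight_def weight_single_vertex_tree white_side_single_vertex_tree)

lemma signed_weight_symmetric_tree:
  "P \<noteq> [] \<Longrightarrow> balanced P \<Longrightarrow> signed_weight (symmetric_tree d P D) = (if d then -1 else 1)"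
  by (simp add: signed_weight_def weight_symmetric_tree white_side_symmetric_tree alt_color_def)

lemma
  assumes "rt_valid T" "weight T \<noteq> 0" "length (snd T) \<noteq> 1"
  shows unfold_fold_tree: "unfold_tree (fold_tree T) = T"
    and all_degs_fold_tree: "all_degs (fold_tree T) = all_degs T"
    and length_fold_tree: "length (snd (fold_tree T)) = 1"
    and signed_weight_fold_tree: "signed_weight (fold_tree T) = - signed_weight T"
proof -
  obtain d P D where P: "P \<noteq> []" "balanced P" and T: "T = symmetric_tree d P D"
    using assms by (rule symmetric_tree_if_weight_nonzero)
  show "unfold_tree (fold_tree T) = T"
    using P T by (simp add: fold_symmetric_tree unfold_single_vertex_tree unfold_fold_ptree)
  show "all_degs (fold_tree T) = all_degs T"
    using P T by (simp add: fold_symmetric_tree all_degs_symmetric_tree)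
  show "length (snd (fold_tree T)) = 1"
    using T by (simp add: fold_symmetric_tree single_vertex_tree_def)
  show "signed_weight (fold_tree T) = - signed_weight T"
    using P T by (simp add: fold_symmetric_tree signed_weight_single_vertex_tree
        signed_weight_symmetric_tree)
qed

lemma
  assumes "snd T = [t # D]"
  shows fold_unfold_tree: "fold_tree (unfold_tree T) = T"
    and all_degs_unfold_tree: "all_degs (unfold_tree T) = all_degs T"
    and rt_valid_unfold_tree: "rt_valid (unfold_tree T)"
    and length_unfold_tree: "length (snd (unfold_tree T)) \<noteq> 1"
    and weight_unfold_tree: "weight (unfold_tree T) \<noteq> 0"
proof -
  have T: "T = single_vertex_tree (fst T) t D"
    using assms by (simp add: single_vertex_tree_def prod_eq_iff)
  have t: "unfold_ptree t \<noteq> []" "balanced (unfold_ptree t)" "fold_ptree (unfold_ptree t) = t"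
    using unfold_ptree_valid by blast+
  have unfold: "unfold_tree T = symmetric_tree (fst T) (unfold_ptree t) D"
    by (subst T) (rule unfold_single_vertex_tree)
  show "fold_tree (unfold_tree T) = T"
    using t by (subst T, simp add: unfold fold_symmetric_tree)
  show "all_degs (unfold_tree T) = all_degs T"
    using t by (subst (2) T, simp add: unfold all_degs_symmetric_tree)
  show "rt_valid (unfold_tree T)" and "length (snd (unfold_tree T)) \<noteq> 1"
    using t by (simp_all add: unfold rt_valid_def symmetric_tree_def)
  show "weight (unfold_tree T) \<noteq> 0"
    using t by (simp add: unfold weight_symmetric_tree)
qed

text \<open>The hypothesis on Q excludes the isolated vertex, the one single vertex tree with no
  planted tree to unfold.\<close>

lemma sum_signed_weight_eq_0:
  fixes Q :: "(bool \<times> nat) multiset \<Rightarrow> bool"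
  assumes finite: "finite {T. rt_valid T \<and> Q (all_degs T)}"
    and no_isolated: "\<And>M c. Q M \<Longrightarrow> (c, 0) \<notin># M"
  shows "(\<Sum>T | rt_valid T \<and> Q (all_degs T). signed_weight T) = 0"
proof -
  define Z where "Z = {T. rt_valid T \<and> Q (all_degs T)}"
  define Z1 where "Z1 = {T \<in> Z. length (snd T) = 1}"
  define Zr where "Zr = {T \<in> Z. length (snd T) \<noteq> 1 \<and> weight T \<noteq> 0}"
  have "(\<Sum>T\<in>Zr. signed_weight T) = (\<Sum>T\<in>Z1. - signed_weight T)"
  proof (rule sum.reindex_bij_witness[where i = unfold_tree and j = fold_tree])
    fix T assume "T \<in> Zr"
    then show "unfold_tree (fold_tree T) = T" and "fold_tree T \<in> Z1"
      and "- signed_weight (fold_tree T) = signed_weight T"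
      by (auto simp: Zr_def Z1_def Z_def rt_valid_def unfold_fold_tree all_degs_fold_tree
          length_fold_tree signed_weight_fold_tree simp flip: length_greater_0_conv)
  next
    fix T assume "T \<in> Z1"
    then obtain d X where T: "T = (d, [X])" and "T \<in> Z"
      by (auto simp: Z1_def length_Suc_conv prod_eq_iff)
    have "X \<noteq> []"
    proof
      assume "X = []"
      then have "all_degs T = {#(d, 0)#}" using T by (simp add: all_degs_eq_path_degs hanging_degs_def)
      then show False using \<open>T \<in> Z\<close> no_isolated[of "all_degs T" d] by (simp add: Z_def)
    qed
    then have "snd T = [hd X # tl X]" using T by simp
    then show "fold_tree (unfold_tree T) = T" and "unfold_tree T \<in> Zr"
      using \<open>T \<in> Z\<close> all_degs_unfold_tree rt_valid_unfold_tree length_unfold_tree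
        weight_unfold_tree by (simp_all add: Zr_def Z_def fold_unfold_tree)
  qed
  moreover have "(\<Sum>T\<in>Z. signed_weight T) = (\<Sum>T\<in>Z1 \<union> Zr. signed_weight T)"
    using finite by (intro sum.mono_neutral_right) (auto simp: Z_def Z1_def Zr_def signed_weight_def)
  moreover have "\<dots> = (\<Sum>T\<in>Z1. signed_weight T) + (\<Sum>T\<in>Zr. signed_weight T)"
    using finite by (intro sum.union_disjoint) (auto simp: Z_def Z1_def Zr_def elim: rev_finite_subset)
  ultimately show ?thesis by (simp add: Z_def sum_negf)
qed

theorem lemma3p14:
  fixes n :: nat and Lw Lb :: "nat multiset"
  assumes "0 < n" and "is_partition n Lw" and "is_partition n Lb"
  shows "(\<Sum>T\<in>W_set Lw Lb. weight T) - (\<Sum>T\<in>B_set Lw Lb. weight T) = 0"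
proof -
  define Q where "Q M \<longleftrightarrow> image_mset snd (filter_mset fst M) = Lw
      \<and> image_mset snd (filter_mset (\<lambda>p. \<not> fst p) M) = Lb" for M :: "(bool \<times> nat) multiset"
  define Z where "Z = {T. rt_valid T \<and> Q (all_degs T)}"
  have "Z \<subseteq> {T. size (all_degs T) = size Lw + size Lb}"
    by (auto simp: Z_def Q_def size_all_degs white_degs_def black_degs_def)
  then have "finite Z" using finite_size_all_degs finite_subset by blast
  moreover have "(c, 0) \<notin># M" if "Q M" for M c
  proof
    assume "(c, 0) \<in># M"
    then have "0 \<in># Lw \<or> 0 \<in># Lb"
      using that unfolding Q_def by (cases c) (auto simp: image_iff intro!: bexI[of _ "(c, 0)"])
    then show False using assms(2,3) by (auto simp: is_partition_def)
  qed
  ultimately have "(\<Sum>T\<in>Z. signed_weight T) = 0"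
    using sum_signed_weight_eq_0[of Q] by (simp add: Z_def)
  moreover have "W_set Lw Lb = Z \<inter> {T. white_side T}" and "B_set Lw Lb = Z \<inter> - {T. white_side T}"
    by (auto simp: W_set_def B_set_def Z_def Q_def white_degs_def black_degs_def)
  ultimately show ?thesis
    using sum.If_cases[OF \<open>finite Z\<close>, of white_side weight "\<lambda>T. - weight T"]
    by (simp add: signed_weight_def sum_negf)
qed

end
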